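(* Let $\square$ be a cubical complex and $n \geq 0$. Then $\square$ embeds into $I^n$ (i.e. there is an injective map of cubical complexes $V(\square) \to V(I^n)$) if and only if the graph $G(\square)$ embeds into the graph $G(I^n)$, i.e. there is an injective map $V(\square) \to V(I^n)$ sending every edge of $\square$ to an edge of $I^n$.
   Context: A cubical complex consists of a finite vertex set $V$ and a collection $\square$ of nonempty subsets of $V$ (faces) such that: every singleton $\{v\}$, $v\in V$, is a face; for each face $F$ the poset $\hat F=\{G\in\square : G\subseteq F\}$ (ordered by inclusion) is isomorphic to the poset of nonempty faces of a cube (whose dimension is $\dim F$); and the intersection of two faces is empty or a face. $I^n$ denotes the $n$-cube as a cubical complex: vertex set $\{0,1\}^n$, and faces indexed by $(p_1,\dots,p_n)\in\{0,1,*\}^n$, the face being the set of $x\in\{0,1\}^n$ with $x_i=p_i$ whenever $p_i\neq *$. A map of cubical complexes is a function between vertex sets sending each face onto a face; an injective map is an embedding. The graph $G(\square)$ is the 1-skeleton: vertices and 1-dimensional faces (edges). *)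

theory Defs
  imports Main
begin

text \<open>The n-cube I^n: vertices are boolean lists of length n; faces are indexed
  by patterns p in {0,1,*}^n, encoded as lists of bool option (None = *).\<close>

definition cube_verts :: "nat \<Rightarrow> bool list set" where
  "cube_verts n = {x. length x = n}"

definition cube_face :: "nat \<Rightarrow> bool option list \<Rightarrow> bool list set" where
  "cube_face n p = {x. length x = n \<and> (\<forall>i<n. p ! i \<noteq> None \<longrightarrow> x ! i = the (p ! i))}"

definition cube_faces :: "nat \<Rightarrow> bool list set set" where
  "cube_faces n = {cube_face n p | p. length p = n}"

definition incl_iso :: "'a set set \<Rightarrow> 'b set set \<Rightarrow> bool" where
  "incl_iso A B \<longleftrightarrow> (\<exists>f. bij_betw f A B \<and> (\<forall>x\<in>A. \<forall>y\<in>A. x \<subseteq> y \<longleftrightarrow> f x \<subseteq> f y))"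

definition face_dim :: "'a set set \<Rightarrow> 'a set \<Rightarrow> nat \<Rightarrow> bool" where
  "face_dim Q F d \<longleftrightarrow> incl_iso {G\<in>Q. G \<subseteq> F} (cube_faces d)"

definition cubical_complex :: "'a set \<Rightarrow> 'a set set \<Rightarrow> bool" where
  "cubical_complex V Q \<longleftrightarrow>
     finite V \<and>
     (\<forall>F\<in>Q. F \<noteq> {} \<and> F \<subseteq> V) \<and>
     (\<forall>v\<in>V. {v} \<in> Q) \<and>
     (\<forall>F\<in>Q. \<exists>d. face_dim Q F d) \<and>
     (\<forall>F\<in>Q. \<forall>G\<in>Q. F \<inter> G = {} \<or> F \<inter> G \<in> Q)"

definition cc_map :: "'a set \<Rightarrow> 'a set set \<Rightarrow> 'b set \<Rightarrow> 'b set set \<Rightarrow> ('a \<Rightarrow> 'b) \<Rightarrow> bool" where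
  "cc_map V Q W R f \<longleftrightarrow> f ` V \<subseteq> W \<and> (\<forall>F\<in>Q. f ` F \<in> R)"

definition cc_embedding :: "'a set \<Rightarrow> 'a set set \<Rightarrow> 'b set \<Rightarrow> 'b set set \<Rightarrow> ('a \<Rightarrow> 'b) \<Rightarrow> bool" where
  "cc_embedding V Q W R f \<longleftrightarrow> cc_map V Q W R f \<and> inj_on f V"

definition cc_edges :: "'a set set \<Rightarrow> 'a set set" where
  "cc_edges Q = {F\<in>Q. face_dim Q F 1}"

definition graph_embedding :: "'a set \<Rightarrow> 'a set set \<Rightarrow> 'b set \<Rightarrow> 'b set set \<Rightarrow> ('a \<Rightarrow> 'b) \<Rightarrow> bool" where
  "graph_embedding V Q W R f \<longleftrightarrow>
     f ` V \<subseteq> W \<and> inj_on f V \<and> (\<forall>e\<in>cc_edges Q. f ` e \<in> cc_edges R)"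

end

theory Submission
  imports Defs
begin

text \<open>A face of a cubical complex carries, through the isomorphism of its face poset with that
  of a cube, a bijection from the vertices of some cube I^d onto the vertices of the face, under
  which edges of I^d become edges of the complex. Composing with a graph embedding into I^n gives
  an injective map I^d \<rightarrow> I^n taking edges to edges. Such a map sends parallel edges of I^d to
  parallel edges of I^n, since each square of I^d must go to a square; hence coordinate i of I^d
  is sent to a single coordinate \<delta> i of I^n, injectively, and the image of I^d is the face of
  I^n through the image of the origin spanned by the coordinates \<delta> ` {..<d}. So a graph embedding
  maps every face onto a face. Conversely edges are exactly the two-element faces, so an embedding
  of complexes is a graph embedding.\<close>

definition flip :: "nat \<Rightarrow> bool list \<Rightarrow> bool list" where
  "flip k y = y[k := \<not> y ! k]"

lemma length_flip [simp]: "length (flip k y) = length y"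
  by (simp add: flip_def)

lemma nth_flip: "j < length y \<Longrightarrow> flip k y ! j = (if j = k then \<not> y ! j else y ! j)"
  by (auto simp: flip_def nth_list_update)

lemma flip_flip [simp]: "flip k (flip k y) = y"
  by (rule nth_equalityI) (auto simp: nth_flip)

lemma flip_commute: "flip i (flip j y) = flip j (flip i y)"
  by (rule nth_equalityI) (auto simp: nth_flip)

lemma flip_neq: "k < length y \<Longrightarrow> flip k y \<noteq> y"
  by (metis nth_flip)

lemma flip_in_cube_verts [simp]: "flip k x \<in> cube_verts d \<longleftrightarrow> x \<in> cube_verts d"
  by (simp add: cube_verts_def)

lemma flip_square_cancel:
  assumes "a < length y" "b < length y" "a \<noteq> b" "e \<noteq> b"
    and "flip c (flip a y) = flip e (flip b y)"
  shows "c = b"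
proof -
  have "flip c (flip a y) ! b = flip e (flip b y) ! b" using assms(5) by simp
  with assms(1-4) show ?thesis by (auto simp: nth_flip split: if_splits)
qed

lemma cube_verts_induct [consumes 1, case_names origin flip]:
  assumes "x \<in> cube_verts d" and "P (replicate d False)"
    and flip: "\<And>x i. x \<in> cube_verts d \<Longrightarrow> i < d \<Longrightarrow> P x \<Longrightarrow> P (flip i x)"
  shows "P x"
  using assms(1)
proof (induction "card {i. i < d \<and> x ! i}" arbitrary: x)
  case 0
  then have "\<forall>i<d. \<not> x ! i" by (simp add: card_eq_0_iff)
  with 0 have "x = replicate d False" by (intro nth_equalityI) (auto simp: cube_verts_def)
  with assms(2) show ?case by simp
next
  case (Suc m)
  then have "{i. i < d \<and> x ! i} \<noteq> {}" by (metis card.empty nat.distinct(1))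
  then obtain i where i: "i < d" "x ! i" by blast
  have lx: "length x = d" using Suc.prems by (simp add: cube_verts_def)
  have "{j. j < d \<and> flip i x ! j} = {j. j < d \<and> x ! j} - {i}"
    using lx i by (auto simp: nth_flip split: if_split_asm)
  then have "card {j. j < d \<and> flip i x ! j} = m" using Suc.hyps(2) i by simp
  then have "P (flip i x)" using Suc.hyps(1) Suc.prems by simp
  then show ?case using flip[of "flip i x" i] Suc.prems i(1) by simp
qed

lemma cube_faces_subset: "F \<in> cube_faces n \<Longrightarrow> F \<subseteq> cube_verts n"
  by (auto simp: cube_faces_def cube_face_def cube_verts_def)

lemma cube_face_nonempty: "F \<in> cube_faces n \<Longrightarrow> F \<noteq> {}"
proof -
  assume "F \<in> cube_faces n"
  then obtain p where p: "length p = n" "F = cube_face n p" by (auto simp: cube_faces_def)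
  then have "map (case_option False id) p \<in> F" by (auto simp: cube_face_def)
  then show ?thesis by auto
qed

lemma singleton_in_cube_faces:
  assumes "x \<in> cube_verts n"
  shows "{x} \<in> cube_faces n"
proof -
  have "{x} = cube_face n (map Some x)"
    using assms by (auto simp: cube_face_def cube_verts_def intro: nth_equalityI)
  with assms show ?thesis by (auto simp: cube_faces_def cube_verts_def)
qed

lemma Union_cube_faces: "\<Union>(cube_faces n) = cube_verts n"
  using cube_faces_subset singleton_in_cube_faces by blast

lemma cube_edge_in_cube_faces:
  assumes x: "x \<in> cube_verts d" and i: "i < d"
  shows "{x, flip i x} \<in> cube_faces d"
proof -
  have lx: "length x = d" using x by (simp add: cube_verts_def)
  let ?p = "(map Some x)[i := None]"
  have "y \<in> {x, flip i x}" if "y \<in> cube_face d ?p" for y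
  proof -
    from that lx have ly: "length y = d" and agree: "\<forall>j<d. j \<noteq> i \<longrightarrow> y ! j = x ! j"
      by (auto simp: cube_face_def nth_list_update)
    show ?thesis
    proof (cases "y ! i = x ! i")
      case True
      then have "\<forall>j<d. y ! j = x ! j" using agree by metis
      then have "y = x" using ly lx by (simp add: nth_equalityI)
      then show ?thesis by simp
    next
      case False
      then have "y = flip i x" using ly lx agree by (intro nth_equalityI) (auto simp: nth_flip)
      then show ?thesis by simp
    qed
  qed
  moreover have "{x, flip i x} \<subseteq> cube_face d ?p"
    using lx i by (auto simp: cube_face_def nth_flip nth_list_update)
  ultimately have "{x, flip i x} = cube_face d ?p" by blast
  with lx show ?thesis by (auto simp: cube_faces_def)
qed

lemma cube_faces_pairD:
  assumes F: "{a, b} \<in> cube_faces n" and ab: "a \<noteq> b"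
  shows "\<exists>k<n. b = flip k a"
proof -
  obtain p where p: "length p = n" "{a, b} = cube_face n p" using F by (auto simp: cube_faces_def)
  have la: "length a = n" and lb: "length b = n" using p by (auto simp: cube_face_def)
  have ab_face: "a \<in> cube_face n p" "b \<in> cube_face n p" using p(2) by blast+
  have free: "p ! i = None" if "i < n" "a ! i \<noteq> b ! i" for i
  proof (rule ccontr)
    assume "p ! i \<noteq> None"
    with ab_face that show False by (auto simp: cube_face_def)
  qed
  obtain i where i: "i < n" "a ! i \<noteq> b ! i"
    using ab la lb by (auto simp: list_eq_iff_nth_eq)
  have "a ! j = b ! j" if j: "j < n" "j \<noteq> i" for j
  proof (rule ccontr)
    assume "a ! j \<noteq> b ! j"
    from ab_face(1) have "flip i a \<in> cube_face n p"
      using free[OF i] la by (auto simp: cube_face_def nth_flip)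
    then have "flip i a \<in> {a, b}" using p by auto
    moreover have "flip i a \<noteq> a" using flip_neq i la by auto
    moreover have "flip i a ! j = a ! j" using j la by (simp add: nth_flip)
    ultimately show False using \<open>a ! j \<noteq> b ! j\<close> by auto
  qed
  then have "b = flip i a" using i la lb by (intro nth_equalityI) (auto simp: nth_flip)
  with i show ?thesis by blast
qed

lemma cube_faces_one: "cube_faces 1 = {{[True]}, {[False]}, {[True], [False]}}"
proof -
  have patterns: "length p = 1 \<longleftrightarrow> p = [None] \<or> p = [Some True] \<or> p = [Some False]"
    for p :: "bool option list"
    by (auto simp: length_Suc_conv)
  have "cube_face 1 [None] = {[True], [False]}" "cube_face 1 [Some True] = {[True]}"
    "cube_face 1 [Some False] = {[False]}"
    by (auto simp: cube_face_def length_Suc_conv)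
  then show ?thesis unfolding cube_faces_def patterns by auto
qed

lemma cube_verts_one: "cube_verts 1 = {[True], [False]}"
proof -
  have "cube_verts 1 = \<Union>(cube_faces 1)" by (rule Union_cube_faces[symmetric])
  also have "\<dots> = {[True], [False]}" unfolding cube_faces_one by blast
  finally show ?thesis .
qed

definition singleton_closed :: "'a set set \<Rightarrow> bool" where
  "singleton_closed A \<longleftrightarrow> (\<forall>X\<in>A. X \<noteq> {} \<and> (\<forall>a\<in>X. {a} \<in> A))"

lemma singleton_closed_cube_faces: "singleton_closed (cube_faces n)"
  using cube_face_nonempty cube_faces_subset singleton_in_cube_faces
  by (fastforce simp: singleton_closed_def)

lemma cubical_complex_singleton_closed: "cubical_complex V Q \<Longrightarrow> singleton_closed Q"
  by (fastforce simp: cubical_complex_def singleton_closed_def)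

lemma singleton_closed_faces_below: "singleton_closed A \<Longrightarrow> singleton_closed {X\<in>A. X \<subseteq> F}"
  by (auto simp: singleton_closed_def)

lemma Union_faces_below: "F \<in> A \<Longrightarrow> \<Union>{X\<in>A. X \<subseteq> F} = F"
  by auto

lemma incl_iso_sym: "incl_iso A B \<Longrightarrow> incl_iso B A"
proof -
  assume "incl_iso A B"
  then obtain \<phi> where \<phi>: "bij_betw \<phi> A B" and ord: "\<forall>X\<in>A. \<forall>Y\<in>A. X \<subseteq> Y \<longleftrightarrow> \<phi> X \<subseteq> \<phi> Y"
    by (auto simp: incl_iso_def)
  have "bij_betw (inv_into A \<phi>) B A" using \<phi> by (rule bij_betw_inv_into)
  moreover have "\<forall>X\<in>B. \<forall>Y\<in>B. X \<subseteq> Y \<longleftrightarrow> inv_into A \<phi> X \<subseteq> inv_into A \<phi> Y"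
    using \<phi> ord by (auto simp: bij_betw_def inv_into_into f_inv_into_f)
  ultimately show ?thesis by (auto simp: incl_iso_def)
qed

lemma incl_iso_singleton_below:
  assumes \<phi>: "bij_betw \<phi> A B" and ord: "\<forall>X\<in>A. \<forall>Y\<in>A. X \<subseteq> Y \<longleftrightarrow> \<phi> X \<subseteq> \<phi> Y"
    and B: "singleton_closed B" and X: "X \<in> A" and b: "b \<in> \<phi> X"
  shows "\<exists>Y\<in>A. Y \<subseteq> X \<and> \<phi> Y = {b}"
proof -
  have "{b} \<in> B" using B bij_betw_apply[OF \<phi> X] b by (auto simp: singleton_closed_def)
  then obtain Y where Y: "Y \<in> A" "\<phi> Y = {b}" using \<phi> by (auto simp: bij_betw_def)
  then show ?thesis using ord X b by auto
qed

text \<open>The atoms of a singleton-closed family are its singletons, and an isomorphism must match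
  atoms; the resulting point bijection then recovers every member as the set of atoms below it.\<close>

lemma incl_iso_induced_by_bij:
  assumes "incl_iso A B" and A: "singleton_closed A" and B: "singleton_closed B"
  shows "\<exists>h. bij_betw h (\<Union>A) (\<Union>B) \<and> (\<forall>X\<in>A. h ` X \<in> B)"
proof -
  obtain \<phi> where \<phi>: "bij_betw \<phi> A B" and ord: "\<forall>X\<in>A. \<forall>Y\<in>A. X \<subseteq> Y \<longleftrightarrow> \<phi> X \<subseteq> \<phi> Y"
    using assms(1) by (auto simp: incl_iso_def)
  note below = incl_iso_singleton_below[OF \<phi> ord B]
  have sA: "a \<in> \<Union>A \<Longrightarrow> {a} \<in> A" and neA: "X \<in> A \<Longrightarrow> X \<noteq> {}" for a X
    using A by (auto simp: singleton_closed_def)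
  have "\<exists>b. \<phi> {a} = {b}" if a: "a \<in> \<Union>A" for a
  proof -
    obtain b where "b \<in> \<phi> {a}"
      using B bij_betw_apply[OF \<phi> sA[OF a]] by (auto simp: singleton_closed_def)
    then obtain Y where "Y \<in> A" "Y \<subseteq> {a}" "\<phi> Y = {b}" using below sA[OF a] by blast
    then show ?thesis using neA by (metis subset_singletonD)
  qed
  then obtain h where h: "\<And>a. a \<in> \<Union>A \<Longrightarrow> \<phi> {a} = {h a}" by metis
  have image: "\<phi> X = h ` X" if X: "X \<in> A" for X
  proof
    show "h ` X \<subseteq> \<phi> X"
    proof (rule image_subsetI)
      fix a assume "a \<in> X"
      then have "a \<in> \<Union>A" using X by blast
      moreover have "\<phi> {a} \<subseteq> \<phi> X" using ord sA[OF \<open>a \<in> \<Union>A\<close>] X \<open>a \<in> X\<close> by blast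
      ultimately show "h a \<in> \<phi> X" using h by simp
    qed
    show "\<phi> X \<subseteq> h ` X"
    proof
      fix b assume "b \<in> \<phi> X"
      then obtain Y where Y: "Y \<in> A" "Y \<subseteq> X" "\<phi> Y = {b}" using below X by blast
      then obtain a where a: "a \<in> Y" using neA by blast
      then have "\<phi> {a} \<subseteq> \<phi> Y" using ord sA Y(1) by blast
      then have "h a = b" using h Y a by blast
      then show "b \<in> h ` X" using a Y(2) by blast
    qed
  qed
  have "inj_on h (\<Union>A)"
  proof (rule inj_onI)
    fix a a' assume a: "a \<in> \<Union>A" "a' \<in> \<Union>A" "h a = h a'"
    then have "\<phi> {a} = \<phi> {a'}" using h by simp
    then have "{a} = {a'}" using bij_betw_imp_inj_on[OF \<phi>] sA a by (meson inj_onD)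
    then show "a = a'" by simp
  qed
  moreover have "h ` \<Union>A = \<Union>B"
  proof -
    have "h ` \<Union>A = \<Union>(\<phi> ` A)" using image by (simp add: image_Union)
    also have "\<dots> = \<Union>B" using \<phi> by (simp add: bij_betw_def)
    finally show ?thesis .
  qed
  ultimately show ?thesis using image bij_betw_apply[OF \<phi>] by (auto simp: bij_betw_def)
qed

lemma incl_iso_two_points:
  assumes "a \<noteq> b" "c \<noteq> e"
  shows "incl_iso {{a}, {b}, {a, b}} {{c}, {e}, {c, e}}"
proof -
  define \<phi> where "\<phi> = image (\<lambda>z. if z = a then c else e)"
  have images: "\<phi> {a} = {c}" "\<phi> {b} = {e}" "\<phi> {a, b} = {c, e}" using assms by (auto simp: \<phi>_def)
  then have "bij_betw \<phi> {{a}, {b}, {a, b}} {{c}, {e}, {c, e}}"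
    using assms by (auto simp: bij_betw_def inj_on_def)
  with images assms show ?thesis by (auto simp: incl_iso_def)
qed

lemma mem_cc_edges_iff:
  assumes R: "singleton_closed R"
  shows "e \<in> cc_edges R \<longleftrightarrow> e \<in> R \<and> card e = 2"
proof
  assume "e \<in> cc_edges R"
  then have e: "e \<in> R" and "incl_iso {X\<in>R. X \<subseteq> e} (cube_faces 1)"
    by (auto simp: cc_edges_def face_dim_def)
  then obtain h where "bij_betw h (\<Union>{X\<in>R. X \<subseteq> e}) (\<Union>(cube_faces 1))"
    using incl_iso_induced_by_bij singleton_closed_faces_below[OF R] singleton_closed_cube_faces
    by blast
  then have "bij_betw h e (cube_verts 1)"
    by (simp only: Union_faces_below[OF e] Union_cube_faces)
  then have "card e = card (cube_verts 1)" by (rule bij_betw_same_card)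
  also have "\<dots> = 2" unfolding cube_verts_one by simp
  finally show "e \<in> R \<and> card e = 2" using e by simp
next
  assume "e \<in> R \<and> card e = 2"
  then obtain a b where e: "e \<in> R" "e = {a, b}" "a \<noteq> b" by (auto simp: card_2_iff)
  have "X \<in> {{a}, {b}, {a, b}}" if "X \<subseteq> {a, b}" "X \<noteq> {}" for X
    using that by blast
  with e R have "{X\<in>R. X \<subseteq> e} = {{a}, {b}, {a, b}}"
    unfolding singleton_closed_def by blast
  moreover have "incl_iso {{a}, {b}, {a, b}} (cube_faces 1)"
    unfolding cube_faces_one using \<open>a \<noteq> b\<close> by (simp add: incl_iso_two_points)
  ultimately show "e \<in> cc_edges R" using e by (simp add: cc_edges_def face_dim_def)
qed

locale hypercube_embedding =
  fixes d n :: nat and g :: "bool list \<Rightarrow> bool list"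
  assumes maps_to: "x \<in> cube_verts d \<Longrightarrow> g x \<in> cube_verts n"
    and inj: "inj_on g (cube_verts d)"
    and adjacent: "x \<in> cube_verts d \<Longrightarrow> i < d \<Longrightarrow> \<exists>k<n. g (flip i x) = flip k (g x)"
begin

abbreviation origin :: "bool list" where
  "origin \<equiv> replicate d False"

definition direction :: "nat \<Rightarrow> nat" where
  "direction i = (SOME k. k < n \<and> g (flip i origin) = flip k (g origin))"

lemma origin_in_cube_verts: "origin \<in> cube_verts d"
  by (simp add: cube_verts_def)

lemma length_g: "x \<in> cube_verts d \<Longrightarrow> length (g x) = n"
  using maps_to by (simp add: cube_verts_def)

lemma g_eq_iff: "x \<in> cube_verts d \<Longrightarrow> y \<in> cube_verts d \<Longrightarrow> g x = g y \<longleftrightarrow> x = y"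
  using inj by (auto dest: inj_onD)

lemma direction: "i < d \<Longrightarrow> direction i < n \<and> g (flip i origin) = flip (direction i) (g origin)"
  unfolding direction_def by (rule someI_ex) (use adjacent origin_in_cube_verts in blast)

lemma direction_eq_iff: "i < d \<Longrightarrow> j < d \<Longrightarrow> direction i = direction j \<longleftrightarrow> i = j"
proof
  assume ij: "i < d" "j < d" "direction i = direction j"
  then have "g (flip i origin) = g (flip j origin)" using direction by simp
  then have "flip i origin = flip j origin" using g_eq_iff origin_in_cube_verts by simp
  then have "flip i origin ! i = flip j origin ! i" by simp
  with ij show "i = j" by (auto simp: nth_flip split: if_splits)
qed simp

text \<open>The image of a square of I^d closes up, so opposite edges of the square are mapped to
  edges in the same direction.\<close>

lemma flip_direction_square:
  assumes x: "x \<in> cube_verts d" and ij: "i < d" "j < d" "i \<noteq> j"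
    and gi: "g (flip i x) = flip (direction i) (g x)"
    and gj: "g (flip j x) = flip (direction j) (g x)"
  shows "g (flip j (flip i x)) = flip (direction j) (g (flip i x))"
proof -
  obtain c where c: "g (flip j (flip i x)) = flip c (g (flip i x))"
    using adjacent[of "flip i x" j] x ij by auto
  obtain e where e: "g (flip i (flip j x)) = flip e (g (flip j x))"
    using adjacent[of "flip j x" i] x ij by auto
  have "e \<noteq> direction j"
  proof
    assume "e = direction j"
    then have "g (flip i (flip j x)) = g x" using e gj by simp
    then have "flip i (flip j x) ! i = x ! i" using g_eq_iff x by simp
    then show False using ij x by (simp add: nth_flip cube_verts_def)
  qed
  moreover have "flip c (flip (direction i) (g x)) = flip e (flip (direction j) (g x))"
  proof -
    have "flip c (flip (direction i) (g x)) = g (flip j (flip i x))" using c gi by simp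
    also have "\<dots> = g (flip i (flip j x))" by (rule arg_cong[where f = g], rule flip_commute)
    also have "\<dots> = flip e (flip (direction j) (g x))" using e gj by simp
    finally show ?thesis .
  qed
  moreover have "direction i < length (g x)" "direction j < length (g x)"
    "direction i \<noteq> direction j"
    using direction ij direction_eq_iff length_g x by auto
  ultimately have "c = direction j" using flip_square_cancel by blast
  with c show ?thesis by simp
qed

lemma flip_direction:
  assumes "x \<in> cube_verts d" "j < d"
  shows "g (flip j x) = flip (direction j) (g x)"
  using assms
proof (induction x arbitrary: j rule: cube_verts_induct)
  case origin
  then show ?case using direction by simp
next
  case (flip x i)
  show ?case
  proof (cases "j = i")
    case True
    then show ?thesis using flip.IH[of i] flip.hyps by simp
  next
    case False
    then show ?thesis
      using flip_direction_square[OF flip.hyps flip.prems] flip.IH flip.hyps flip.prems by simp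
  qed
qed

lemma nth_g_direction:
  assumes "x \<in> cube_verts d" "i < d"
  shows "g x ! direction i = (g origin ! direction i \<noteq> x ! i)"
  using assms
proof (induction x arbitrary: i rule: cube_verts_induct)
  case origin
  then show ?case by simp
next
  case (flip x j)
  have "x ! i \<noteq> flip j x ! i \<longleftrightarrow> i = j"
    using flip.hyps(1) flip.prems by (auto simp: nth_flip cube_verts_def)
  then show ?case
    using flip flip_direction direction direction_eq_iff length_g by (auto simp: nth_flip)
qed

lemma nth_g_fixed:
  assumes "x \<in> cube_verts d" "k < n" "k \<notin> direction ` {..<d}"
  shows "g x ! k = g origin ! k"
  using assms
proof (induction x rule: cube_verts_induct)
  case (flip x j)
  then show ?case using flip_direction length_g by (auto simp: nth_flip)
qed simp

lemma image_in_cube_faces: "g ` cube_verts d \<in> cube_faces n"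
proof -
  define p where
    "p = map (\<lambda>k. if k \<in> direction ` {..<d} then None else Some (g origin ! k)) [0..<n]"
  have "y \<in> g ` cube_verts d" if y: "y \<in> cube_face n p" for y
  proof -
    define x where "x = map (\<lambda>i. y ! direction i \<noteq> g origin ! direction i) [0..<d]"
    have x: "x \<in> cube_verts d" by (simp add: x_def cube_verts_def)
    have "g x ! k = y ! k" if k: "k < n" for k
    proof (cases "k \<in> direction ` {..<d}")
      case True
      then show ?thesis using nth_g_direction[OF x] by (auto simp: x_def)
    next
      case False
      then show ?thesis using nth_g_fixed[OF x k] y k by (auto simp: cube_face_def p_def)
    qed
    then have "g x = y" using y length_g[OF x] by (intro nth_equalityI) (auto simp: cube_face_def)
    with x show ?thesis by blast
  qed
  moreover have "g ` cube_verts d \<subseteq> cube_face n p"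
    using nth_g_fixed length_g by (auto simp: cube_face_def p_def)
  ultimately have "g ` cube_verts d = cube_face n p" by blast
  then show ?thesis by (auto simp: cube_faces_def p_def)
qed

end

lemma cubical_complex_face_parametrization:
  assumes cc: "cubical_complex V Q" and F: "F \<in> Q"
  obtains d h where "bij_betw h (cube_verts d) F" and "\<And>X. X \<in> cube_faces d \<Longrightarrow> h ` X \<in> Q"
proof -
  have Q: "singleton_closed Q" using cc by (rule cubical_complex_singleton_closed)
  obtain d where "face_dim Q F d" using cc F by (auto simp: cubical_complex_def)
  then have "incl_iso (cube_faces d) {G\<in>Q. G \<subseteq> F}" by (simp add: face_dim_def incl_iso_sym)
  then obtain h where "bij_betw h (\<Union>(cube_faces d)) (\<Union>{G\<in>Q. G \<subseteq> F})"
    and faces: "\<forall>X\<in>cube_faces d. h ` X \<in> {G\<in>Q. G \<subseteq> F}"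
    using incl_iso_induced_by_bij singleton_closed_cube_faces singleton_closed_faces_below[OF Q]
    by blast
  moreover have "\<Union>{G\<in>Q. G \<subseteq> F} = F" using F by (rule Union_faces_below)
  ultimately show ?thesis using that Union_cube_faces by auto
qed

lemma graph_embedding_image_in_cube_faces:
  assumes cc: "cubical_complex V Q" and F: "F \<in> Q"
    and f: "graph_embedding V Q (cube_verts n) (cube_faces n) f"
  shows "f ` F \<in> cube_faces n"
proof -
  obtain d h where h: "bij_betw h (cube_verts d) F" and hQ: "\<And>X. X \<in> cube_faces d \<Longrightarrow> h ` X \<in> Q"
    using cubical_complex_face_parametrization[OF cc F] by blast
  have Q: "singleton_closed Q" using cc by (rule cubical_complex_singleton_closed)
  have FV: "F \<subseteq> V" using cc F by (auto simp: cubical_complex_def)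
  have fV: "f ` V \<subseteq> cube_verts n" and f_inj: "inj_on f V"
    and f_edges: "\<And>e. e \<in> cc_edges Q \<Longrightarrow> f ` e \<in> cc_edges (cube_faces n)"
    using f by (auto simp: graph_embedding_def)
  have h_inj: "inj_on h (cube_verts d)" and hF: "h ` cube_verts d = F"
    using h by (auto simp: bij_betw_def)
  have fh_inj: "inj_on (f \<circ> h) (cube_verts d)"
    using h_inj f_inj FV hF by (metis comp_inj_on inj_on_subset)
  interpret hypercube_embedding d n "f \<circ> h"
  proof
    show "x \<in> cube_verts d \<Longrightarrow> (f \<circ> h) x \<in> cube_verts n" for x using hF FV fV by auto
    show "inj_on (f \<circ> h) (cube_verts d)" by (fact fh_inj)
    show "\<exists>k<n. (f \<circ> h) (flip i x) = flip k ((f \<circ> h) x)" if x: "x \<in> cube_verts d" and i: "i < d" for x i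
    proof -
      have ne: "flip i x \<noteq> x" using x i flip_neq by (simp add: cube_verts_def)
      then have "h (flip i x) \<noteq> h x" using h_inj x by (metis flip_in_cube_verts inj_onD)
      then have "h ` {x, flip i x} \<in> cc_edges Q"
        using hQ[OF cube_edge_in_cube_faces[OF x i]] by (simp add: mem_cc_edges_iff[OF Q])
      then have "f ` h ` {x, flip i x} \<in> cc_edges (cube_faces n)" by (rule f_edges)
      then have "{f (h x), f (h (flip i x))} \<in> cube_faces n" by (simp add: cc_edges_def)
      moreover have "f (h x) \<noteq> f (h (flip i x))"
        using fh_inj x ne by (metis comp_apply flip_in_cube_verts inj_onD)
      ultimately show ?thesis using cube_faces_pairD by fastforce
    qed
  qed
  have "f ` F = (f \<circ> h) ` cube_verts d" by (simp only: image_comp[symmetric] hF)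
  with image_in_cube_faces show ?thesis by simp
qed

lemma graph_embedding_imp_cc_embedding:
  assumes "cubical_complex V Q" and "graph_embedding V Q (cube_verts n) (cube_faces n) f"
  shows "cc_embedding V Q (cube_verts n) (cube_faces n) f"
  using assms graph_embedding_image_in_cube_faces[OF assms(1)]
  by (auto simp: cc_embedding_def cc_map_def graph_embedding_def)

lemma cc_embedding_imp_graph_embedding:
  assumes cc: "cubical_complex V Q" and f: "cc_embedding V Q (cube_verts n) (cube_faces n) f"
  shows "graph_embedding V Q (cube_verts n) (cube_faces n) f"
proof -
  have fV: "f ` V \<subseteq> cube_verts n" and fQ: "\<forall>F\<in>Q. f ` F \<in> cube_faces n"
    and f_inj: "inj_on f V"
    using f by (auto simp: cc_embedding_def cc_map_def)
  have "f ` e \<in> cc_edges (cube_faces n)" if e: "e \<in> cc_edges Q" for e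
  proof -
    have "e \<in> Q" "card e = 2"
      using e mem_cc_edges_iff cubical_complex_singleton_closed[OF cc] by blast+
    moreover have "e \<subseteq> V" using \<open>e \<in> Q\<close> cc by (auto simp: cubical_complex_def)
    ultimately show ?thesis
      using fQ f_inj by (simp add: mem_cc_edges_iff singleton_closed_cube_faces card_image inj_on_subset)
  qed
  with fV f_inj show ?thesis by (auto simp: graph_embedding_def)
qed

theorem mainTheorem1:
  fixes V :: "'a set" and Q :: "'a set set" and n :: nat
  assumes "cubical_complex V Q"
  shows "(\<exists>f. cc_embedding V Q (cube_verts n) (cube_faces n) f) \<longleftrightarrow>
         (\<exists>f. graph_embedding V Q (cube_verts n) (cube_faces n) f)"
  using cc_embedding_imp_graph_embedding[OF assms] graph_embedding_imp_cc_embedding[OF assms]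
  by blast

end
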